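(* Let $s_1<\dots<s_n$ be reals and $Z(n,d)\subseteq\mathbb{R}^d$ the cyclic zonotope they define. The poset of proper faces of $Z(n,d)$, ordered by inclusion, is isomorphic to the induced subposet of $\Lambda_n$ consisting of those $\lambda$ with $m(\lambda)\le d-1$.
   Context: $Z(n,d)=\{\sum_{i=1}^n c_iu_i:0\le c_i\le1\}$ with $u_i=(1,s_i,\dots,s_i^{d-1})$. Proper faces are the nonempty faces different from $Z(n,d)$. $\Lambda_n=\{0,+,-\}^n$, partially ordered componentwise by the order on $\{0,+,-\}$ with relations $+<0$ and $-<0$ (and $+,-$ incomparable). For $\lambda=(\lambda_1,\dots,\lambda_n)\in\Lambda_n$: an even gap is a pair of indices $i<j$ with $\lambda_i,\lambda_j$ nonzero of opposite signs, $\lambda_r=0$ for all $i<r<j$, and $j-i-1$ even (possibly zero); an odd gap is a pair $i<j$ with $\lambda_i,\lambda_j$ nonzero of the same sign, $\lambda_r=0$ for all $i<r<j$, and $j-i-1$ odd. $m(\lambda)$ is the number of even gaps plus the number of odd gaps plus the number of zero entries of $\lambda$. *)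

theory Defs
  imports "HOL-Analysis.Analysis"
begin

text \<open>Moment-curve vector u_i = (1, s_i, ..., s_i^(d-1)) in real^'d; the coordinate
  indexed by k :: 'd is the power given by the rank of k in the linear order on 'd,
  so the coordinates run through the exponents 0, ..., CARD('d) - 1.\<close>
definition moment_vec :: "real \<Rightarrow> real ^ ('d::{finite,linorder})" where
  "moment_vec t = (\<chi> k. t ^ card {j::'d. j < k})"

definition cyclic_zonotope :: "nat \<Rightarrow> (nat \<Rightarrow> real) \<Rightarrow> (real ^ ('d::{finite,linorder})) set" where
  "cyclic_zonotope n s =
     {x. \<exists>c::nat \<Rightarrow> real. (\<forall>i\<in>{1..n}. 0 \<le> c i \<and> c i \<le> 1) \<and>
           x = (\<Sum>i=1..n. c i *\<^sub>R moment_vec (s i))}"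

definition proper_faces :: "'a::real_vector set \<Rightarrow> 'a set set" where
  "proper_faces Z = {F. F face_of Z \<and> F \<noteq> {} \<and> F \<noteq> Z}"

datatype sgn = SZero | SPlus | SMinus

definition sgn_le :: "sgn \<Rightarrow> sgn \<Rightarrow> bool" where
  "sgn_le a b \<longleftrightarrow> a = b \<or> b = SZero"

text \<open>Lambda_n: sign vectors of length n (entry i of the paper is position i-1 of the list).\<close>
definition Lambda :: "nat \<Rightarrow> sgn list set" where
  "Lambda n = {l. length l = n}"

definition lam_le :: "sgn list \<Rightarrow> sgn list \<Rightarrow> bool" where
  "lam_le l1 l2 \<longleftrightarrow> length l1 = length l2 \<and> (\<forall>i<length l1. sgn_le (l1 ! i) (l2 ! i))"

definition even_gaps :: "sgn list \<Rightarrow> (nat \<times> nat) set" where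
  "even_gaps l = {(i, j). i < j \<and> j < length l \<and> l ! i \<noteq> SZero \<and> l ! j \<noteq> SZero \<and>
      l ! i \<noteq> l ! j \<and> (\<forall>r. i < r \<and> r < j \<longrightarrow> l ! r = SZero) \<and> even (j - i - 1)}"

definition odd_gaps :: "sgn list \<Rightarrow> (nat \<times> nat) set" where
  "odd_gaps l = {(i, j). i < j \<and> j < length l \<and> l ! i \<noteq> SZero \<and> l ! j \<noteq> SZero \<and>
      l ! i = l ! j \<and> (\<forall>r. i < r \<and> r < j \<longrightarrow> l ! r = SZero) \<and> odd (j - i - 1)}"

definition m_val :: "sgn list \<Rightarrow> nat" where
  "m_val l = card (even_gaps l) + card (odd_gaps l) + card {i. i < length l \<and> l ! i = SZero}"

end

theory Submission
  imports Defs "HOL-Computational_Algebra.Polynomial"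
begin

text \<open>A proper face of the zonotope \<open>\<Sum>i. [0, v\<^sub>i]\<close> is the set of maximisers of a linear functional
  \<open>a\<close> and is determined by the sign vector \<open>(sign (a \<bullet> v\<^sub>i))\<^sub>i\<close>; inclusion of faces is the
  componentwise order on sign vectors. For the moment curve, \<open>a \<bullet> u\<^sub>i = p(s\<^sub>i)\<close> where \<open>p\<close> is the
  polynomial with coefficient vector \<open>a\<close>; hence the proper faces correspond to the sign patterns
  other than \<open>0\<dots>0\<close> of polynomials of degree \<open>< d\<close> at \<open>s\<^sub>1 < \<dots> < s\<^sub>n\<close>. A sign pattern
  \<open>\<lambda>\<close> arises from a nonzero polynomial of degree \<open>\<le> k\<close> iff \<open>m(\<lambda>) \<le> k\<close>: a realising
  polynomial vanishes at the zero entries, and across every gap the sign change produced by these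
  roots has the wrong parity, so the intermediate value theorem yields one more root inside each gap;
  conversely, the polynomial with roots at the zero entries and one root just after the left end of
  every gap realises \<open>\<lambda>\<close> up to a global sign.\<close>

section \<open>Sign vectors and gaps\<close>

definition sign_of :: "real \<Rightarrow> sgn" where
  "sign_of x = (if x > 0 then SPlus else if x < 0 then SMinus else SZero)"

lemma sign_of_eq_iff [simp]:
  "sign_of x = SPlus \<longleftrightarrow> x > 0" "sign_of x = SMinus \<longleftrightarrow> x < 0" "sign_of x = SZero \<longleftrightarrow> x = 0"
  by (auto simp: sign_of_def)

lemma sign_of_eq_iff_mult_pos:
  "a \<noteq> 0 \<Longrightarrow> b \<noteq> 0 \<Longrightarrow> sign_of a = sign_of b \<longleftrightarrow> 0 < a * b"
  by (auto simp: sign_of_def zero_less_mult_iff linorder_neq_iff)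

lemma sign_of_from_product:
  assumes "sign_of a = x" "x \<noteq> SZero" "b \<noteq> 0" "y \<noteq> SZero" "0 < a * b \<longleftrightarrow> x = y"
  shows "sign_of b = y"
  using assms by (cases x; cases y) (auto simp: sign_of_def zero_less_mult_iff split: if_splits)

lemma lam_le_antisym:
  assumes "lam_le l m" "lam_le m l"
  shows "l = m"
proof (rule nth_equalityI)
  show "length l = length m" using assms by (simp add: lam_le_def)
  show "l ! i = m ! i" if "i < length l" for i
    using assms that unfolding lam_le_def sgn_le_def by metis
qed

lemma lam_le_replicate_SZero_iff: "lam_le (replicate n SZero) l \<longleftrightarrow> l = replicate n SZero"
  by (auto simp: lam_le_def sgn_le_def list_eq_iff_nth_eq)

definition zero_positions :: "sgn list \<Rightarrow> nat set" where
  "zero_positions l = {i. i < length l \<and> l ! i = SZero}"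

definition consecutive_nonzero :: "sgn list \<Rightarrow> nat \<Rightarrow> nat \<Rightarrow> bool" where
  "consecutive_nonzero l i j \<longleftrightarrow> i < j \<and> j < length l \<and> l ! i \<noteq> SZero \<and> l ! j \<noteq> SZero \<and>
      (\<forall>r. i < r \<and> r < j \<longrightarrow> l ! r = SZero)"

text \<open>These are exactly the places where a
  polynomial vanishing at the zero entries is forced to have a further root.\<close>

definition gaps :: "sgn list \<Rightarrow> (nat \<times> nat) set" where
  "gaps l = {(i, j). consecutive_nonzero l i j \<and> (l ! i \<noteq> l ! j \<longleftrightarrow> even (j - i - 1))}"

lemma finite_gaps: "finite (gaps l)"
  by (rule finite_subset[of _ "{..<length l} \<times> {..<length l}"])
     (auto simp: gaps_def consecutive_nonzero_def)

lemma m_val_eq: "m_val l = card (zero_positions l) + card (gaps l)"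
proof -
  have "gaps l = even_gaps l \<union> odd_gaps l" "even_gaps l \<inter> odd_gaps l = {}"
    by (auto simp: gaps_def consecutive_nonzero_def even_gaps_def odd_gaps_def)
  with finite_gaps[of l] have "card (gaps l) = card (even_gaps l) + card (odd_gaps l)"
    by (simp add: card_Un_disjoint)
  then show ?thesis by (simp add: m_val_def zero_positions_def)
qed

lemma m_val_replicate_SZero: "m_val (replicate n SZero) = n"
proof -
  have "zero_positions (replicate n SZero) = {..<n}" "gaps (replicate n SZero) = {}"
    by (auto simp: zero_positions_def gaps_def consecutive_nonzero_def)
  then show ?thesis by (simp add: m_val_eq)
qed

lemma consecutive_nonzero_unique:
  "consecutive_nonzero l i j \<Longrightarrow> consecutive_nonzero l i j' \<Longrightarrow> j = j'"
  unfolding consecutive_nonzero_def by (metis linorder_neqE_nat)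

lemma consecutive_nonzero_disjoint:
  "consecutive_nonzero l i j \<Longrightarrow> consecutive_nonzero l a b \<Longrightarrow> a < i \<Longrightarrow> b \<le> i"
  unfolding consecutive_nonzero_def by (metis not_le)

lemma consecutive_nonzero_before:
  assumes "i < length l" "l ! i \<noteq> SZero" "k < i" "l ! k \<noteq> SZero"
  obtains k' where "consecutive_nonzero l k' i"
proof -
  let ?K = "{k. k < i \<and> l ! k \<noteq> SZero}"
  define m where "m = Max ?K"
  have fin: "finite ?K" by simp
  have "m \<in> ?K" unfolding m_def using assms by (intro Max_in fin) auto
  moreover have "l ! r = SZero" if "m < r" "r < i" for r
  proof (rule ccontr)
    assume "l ! r \<noteq> SZero"
    then have "r \<le> m" unfolding m_def using \<open>r < i\<close> by (intro Max_ge fin) simp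
    then show False using \<open>m < r\<close> by simp
  qed
  ultimately have "consecutive_nonzero l m i"
    using assms(1,2) unfolding consecutive_nonzero_def by blast
  then show thesis by (rule that)
qed

lemma sign_pattern_up_to_scaling:
  fixes w :: "nat \<Rightarrow> real"
  assumes zeros: "\<And>i. i < length l \<Longrightarrow> w i = 0 \<longleftrightarrow> l ! i = SZero"
    and changes: "\<And>i j. consecutive_nonzero l i j \<Longrightarrow> 0 < w i * w j \<longleftrightarrow> l ! i = l ! j"
  obtains c :: real where "c \<noteq> 0" "\<And>i. i < length l \<Longrightarrow> sign_of (c * w i) = l ! i"
proof (cases "\<exists>i<length l. l ! i \<noteq> SZero")
  case False
  then show ?thesis using zeros that[of 1] by auto
next
  case True
  define i0 where "i0 = (LEAST i. i < length l \<and> l ! i \<noteq> SZero)"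
  have i0: "i0 < length l" "l ! i0 \<noteq> SZero"
    using LeastI_ex[of "\<lambda>i. i < length l \<and> l ! i \<noteq> SZero"] True unfolding i0_def by auto
  define c :: real where "c = (if sign_of (w i0) = l ! i0 then 1 else -1)"
  have "sign_of (c * w i) = l ! i" if "i < length l" for i
    using that
  proof (induction i rule: less_induct)
    case (less i)
    have "i0 \<le> i" if "l ! i \<noteq> SZero"
      unfolding i0_def using less.prems that by (auto intro: Least_le)
    then consider "l ! i = SZero" | k where "consecutive_nonzero l k i" | "i = i0"
      using consecutive_nonzero_before[OF less.prems _ _ i0(2)] by (metis le_neq_implies_less)
    then show ?case
    proof cases
      case 1
      then show ?thesis using zeros less.prems by simp
    next
      case (2 k)
      then have "sign_of (c * w k) = l ! k" "l ! k \<noteq> SZero" "l ! i \<noteq> SZero" "c * w i \<noteq> 0"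
        using less.IH less.prems zeros by (auto simp: consecutive_nonzero_def c_def)
      moreover have "(c * w k) * (c * w i) = w k * w i"
        by (simp add: c_def)
      ultimately show ?thesis
        using changes[OF 2] by (metis sign_of_from_product)
    next
      case 3
      then show ?thesis using i0 zeros by (cases "l ! i0") (auto simp: c_def sign_of_def)
    qed
  qed
  then show ?thesis using that[of c] by (simp add: c_def)
qed

section \<open>Sign patterns of real polynomials\<close>

lemma zero_less_mult_iff_nonzero:
  fixes a b :: "'a::linordered_idom"
  assumes "a \<noteq> 0" "b \<noteq> 0"
  shows "0 < a * b \<longleftrightarrow> (0 < a \<longleftrightarrow> 0 < b)"
  using assms by (metis linorder_neqE_linordered_idom order_less_imp_not_less zero_less_mult_iff)

lemma prod_pos_iff_even_card_neg:
  fixes f :: "'a \<Rightarrow> 'b::linordered_idom"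
  assumes "finite A" "\<And>x. x \<in> A \<Longrightarrow> f x \<noteq> 0"
  shows "0 < prod f A \<longleftrightarrow> even (card {x\<in>A. f x < 0})"
  using assms
proof (induction A rule: finite_induct)
  case empty
  then show ?case by simp
next
  case (insert a A)
  have "{x\<in>insert a A. f x < 0} = (if f a < 0 then insert a {x\<in>A. f x < 0} else {x\<in>A. f x < 0})"
    by auto
  then have card: "card {x\<in>insert a A. f x < 0} =
      (if f a < 0 then Suc (card {x\<in>A. f x < 0}) else card {x\<in>A. f x < 0})"
    using insert.hyps by simp
  have "f a \<noteq> 0" "prod f A \<noteq> 0"
    using insert.hyps(1) insert.prems by (auto simp: prod_zero_iff)
  then have "0 < f a * prod f A \<longleftrightarrow> (0 < f a \<longleftrightarrow> 0 < prod f A)"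
    by (rule zero_less_mult_iff_nonzero)
  then show ?case
    using insert card \<open>f a \<noteq> 0\<close> by auto
qed

definition root_poly :: "'a::comm_ring_1 set \<Rightarrow> 'a poly" where
  "root_poly R = (\<Prod>r\<in>R. [:- r, 1:])"

lemma poly_root_poly: "poly (root_poly R) x = (\<Prod>r\<in>R. x - r)"
  by (simp add: root_poly_def poly_prod)

lemma root_poly_nonzero: "root_poly (R :: 'a::idom set) \<noteq> 0"
  by (cases "finite R") (auto simp: root_poly_def)

lemma degree_root_poly: "finite R \<Longrightarrow> degree (root_poly (R :: 'a::idom set)) = card R"
  by (simp add: root_poly_def degree_prod_eq_sum_degree)

lemma poly_root_poly_eq_0_iff:
  "finite R \<Longrightarrow> poly (root_poly R) x = 0 \<longleftrightarrow> x \<in> (R :: 'a::idom set)"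
  by (simp add: poly_root_poly prod_zero_iff)

lemma root_poly_dvd:
  fixes p :: "'a::idom poly"
  assumes "finite R" "\<And>r. r \<in> R \<Longrightarrow> poly p r = 0"
  shows "root_poly R dvd p"
  using assms
proof (induction R rule: finite_induct)
  case empty
  then show ?case by (simp add: root_poly_def)
next
  case (insert a R)
  then obtain q where q: "p = root_poly R * q"
    by (auto elim: dvdE)
  have "poly (root_poly R) a \<noteq> 0"
    using insert.hyps by (simp add: poly_root_poly prod_zero_iff)
  moreover have "poly p a = 0"
    using insert.prems by simp
  ultimately have "[:- a, 1:] dvd q"
    using q by (simp add: poly_eq_0_iff_dvd)
  then have "[:- a, 1:] * root_poly R dvd q * root_poly R"
    by (rule mult_dvd_mono) simp
  then show ?case
    using q insert.hyps by (simp add: root_poly_def mult.commute)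
qed

lemma root_poly_pair_pos_iff:
  fixes R :: "'a::linordered_idom set"
  assumes "finite R" "a < b" "a \<notin> R" "b \<notin> R"
  shows "0 < poly (root_poly R) a * poly (root_poly R) b \<longleftrightarrow> even (card (R \<inter> {a<..<b}))"
proof -
  have "poly (root_poly R) a * poly (root_poly R) b = (\<Prod>r\<in>R. (a - r) * (b - r))"
    by (simp add: poly_root_poly prod.distrib)
  moreover have "{r\<in>R. (a - r) * (b - r) < 0} = R \<inter> {a<..<b}"
    using assms(2) by (auto simp: mult_less_0_iff)
  moreover have "(a - r) * (b - r) \<noteq> 0" if "r \<in> R" for r
    using assms(3,4) that by auto
  ultimately show ?thesis
    using prod_pos_iff_even_card_neg[OF assms(1), of "\<lambda>r. (a - r) * (b - r)"] by simp
qed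

lemma zero_positions_between:
  fixes t :: "nat \<Rightarrow> 'a::linorder"
  assumes t: "strict_mono_on {..<length l} t" and ij: "consecutive_nonzero l i j"
  shows "t ` zero_positions l \<inter> {t i<..<t j} = t ` {i<..<j}"
proof -
  have "i < length l" "j < length l"
    using ij by (auto simp: consecutive_nonzero_def)
  then have "t i < t r \<and> t r < t j \<longleftrightarrow> i < r \<and> r < j" if "r < length l" for r
    using that strict_mono_on_less[OF t] by simp
  with ij show ?thesis
    by (auto simp: zero_positions_def consecutive_nonzero_def)
qed

lemma card_image_greaterThanLessThan:
  fixes t :: "nat \<Rightarrow> 'a::linorder"
  assumes t: "strict_mono_on {..<n} t" and "j \<le> n"
  shows "card (t ` {i<..<j}) = j - Suc i"
proof -
  have "inj_on t {i<..<j}"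
    using strict_mono_on_imp_inj_on[OF t] by (rule inj_on_subset) (use assms(2) in auto)
  then show ?thesis by (simp add: card_image)
qed

lemma root_poly_zero_positions_pair_pos_iff:
  fixes t :: "nat \<Rightarrow> real"
  assumes t: "strict_mono_on {..<length l} t" and ij: "consecutive_nonzero l i j"
  shows "0 < poly (root_poly (t ` zero_positions l)) (t i) * poly (root_poly (t ` zero_positions l)) (t j)
    \<longleftrightarrow> even (j - i - 1)"
proof -
  have bounds: "i < j" "j < length l" "l ! i \<noteq> SZero" "l ! j \<noteq> SZero"
    using ij by (auto simp: consecutive_nonzero_def)
  then have "t i \<notin> t ` zero_positions l" "t j \<notin> t ` zero_positions l" "t i < t j"
    using strict_mono_on_imp_inj_on[OF t] strict_mono_on_less[OF t]
    by (auto simp: zero_positions_def inj_on_eq_iff)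
  then show ?thesis
    using root_poly_pair_pos_iff[of "t ` zero_positions l"] zero_positions_between[OF t ij]
      card_image_greaterThanLessThan[OF t, of j i] bounds
    by (simp add: zero_positions_def)
qed

lemma card_gaps_le_degree:
  fixes q :: "real poly" and t :: "nat \<Rightarrow> real"
  assumes t: "strict_mono_on {..<length l} t" and "q \<noteq> 0"
    and sign_change: "\<And>i j. (i, j) \<in> gaps l \<Longrightarrow> poly q (t i) * poly q (t j) < 0"
  shows "card (gaps l) \<le> degree q"
proof -
  have t_less: "t a < t b \<longleftrightarrow> a < b" if "a < length l" "b < length l" for a b
    using strict_mono_on_less[OF t] that by simp
  have gap_bounds: "i < j \<and> j < length l" if "(i, j) \<in> gaps l" for i j
    using that by (auto simp: gaps_def consecutive_nonzero_def)
  have "\<exists>x. t i < x \<and> x < t j \<and> poly q x = 0" if g: "(i, j) \<in> gaps l" for i j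
  proof -
    have "t i < t j"
      using gap_bounds[OF g] t_less by simp
    then show ?thesis
      using poly_IVT[of "t i" "t j" q] sign_change[OF g] by auto
  qed
  then have "\<forall>g\<in>gaps l. \<exists>x. t (fst g) < x \<and> x < t (snd g) \<and> poly q x = 0"
    by (metis prod.collapse)
  then obtain root where root: "\<And>g. g \<in> gaps l \<Longrightarrow>
      t (fst g) < root g \<and> root g < t (snd g) \<and> poly q (root g) = 0"
    by metis
  have root_less: "root g < root h" if "g \<in> gaps l" "h \<in> gaps l" "fst g < fst h" for g h
  proof -
    have "snd g \<le> fst h"
      using that consecutive_nonzero_disjoint[of l "fst h" "snd h" "fst g" "snd g"]
      by (auto simp: gaps_def)
    then have "t (snd g) \<le> t (fst h)"
      using that gap_bounds t_less by (metis le_less less_trans prod.collapse)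
    moreover have "root g < t (snd g)" "t (fst h) < root h"
      using root that by auto
    ultimately show ?thesis by linarith
  qed
  have "inj_on root (gaps l)"
  proof (rule inj_onI)
    fix g h assume gh: "g \<in> gaps l" "h \<in> gaps l" "root g = root h"
    then have "fst g = fst h"
      using root_less by (metis linorder_neqE_nat order_less_irrefl)
    then show "g = h"
      using gh consecutive_nonzero_unique by (auto simp: gaps_def)
  qed
  moreover have "root ` gaps l \<subseteq> {x. poly q x = 0}"
    using root by auto
  ultimately have "card (gaps l) \<le> card {x. poly q x = 0}"
    using card_inj_on_le poly_roots_finite[OF \<open>q \<noteq> 0\<close>] by metis
  also have "\<dots> \<le> degree q"
    by (rule card_poly_roots_bound[OF \<open>q \<noteq> 0\<close>])
  finally show ?thesis .
qed

lemma m_val_sign_pattern_le_degree: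
  fixes p :: "real poly" and t :: "nat \<Rightarrow> real"
  assumes t: "strict_mono_on {..<n} t" and "p \<noteq> 0"
  shows "m_val (map (\<lambda>i. sign_of (poly p (t i))) [0..<n]) \<le> degree p"
proof -
  define l where "l = map (\<lambda>i. sign_of (poly p (t i))) [0..<n]"
  define Z where "Z = t ` zero_positions l"
  have len: "length l = n" and l_nth: "\<And>i. i < n \<Longrightarrow> l ! i = sign_of (poly p (t i))"
    by (simp_all add: l_def)
  have t': "strict_mono_on {..<length l} t"
    using t len by simp
  have fin: "finite Z"
    by (simp add: Z_def zero_positions_def)
  have "root_poly Z dvd p"
    using fin by (rule root_poly_dvd) (auto simp: Z_def zero_positions_def len l_nth)
  then obtain q where q: "p = root_poly Z * q"
    by (elim dvdE)
  with \<open>p \<noteq> 0\<close> have "q \<noteq> 0"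
    by auto
  have "card Z = card (zero_positions l)"
    unfolding Z_def
    by (intro card_image inj_on_subset[OF strict_mono_on_imp_inj_on[OF t']]) (auto simp: zero_positions_def)
  then have deg: "degree p = card (zero_positions l) + degree q"
    using q \<open>q \<noteq> 0\<close> root_poly_nonzero degree_mult_eq degree_root_poly[OF fin] by metis
  have "poly q (t i) * poly q (t j) < 0" if g: "(i, j) \<in> gaps l" for i j
  proof -
    have ij: "consecutive_nonzero l i j" and parity: "l ! i \<noteq> l ! j \<longleftrightarrow> even (j - i - 1)"
      using g by (auto simp: gaps_def)
    then have bounds: "j < n" "i < n" "l ! i \<noteq> SZero" "l ! j \<noteq> SZero"
      using len by (auto simp: consecutive_nonzero_def)
    have "0 < poly (root_poly Z) (t i) * poly (root_poly Z) (t j) \<longleftrightarrow> even (j - i - 1)"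
      unfolding Z_def using t' ij by (rule root_poly_zero_positions_pair_pos_iff)
    moreover have "0 < poly p (t i) * poly p (t j) \<longleftrightarrow> l ! i = l ! j"
      using bounds l_nth sign_of_eq_iff_mult_pos by force
    moreover have "poly p (t i) * poly p (t j) \<noteq> 0"
      using bounds l_nth by simp
    moreover have "poly p (t i) * poly p (t j) =
        (poly (root_poly Z) (t i) * poly (root_poly Z) (t j)) * (poly q (t i) * poly q (t j))"
      using q by (simp add: algebra_simps)
    ultimately show ?thesis
      using parity zero_less_mult_iff_nonzero
      by (metis linorder_neqE_linordered_idom mult_eq_0_iff)
  qed
  then have "card (gaps l) \<le> degree q"
    by (intro card_gaps_le_degree[OF t' \<open>q \<noteq> 0\<close>])
  then show ?thesis
    using deg by (simp add: m_val_eq l_def)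
qed

definition gap_points :: "(nat \<Rightarrow> real) \<Rightarrow> sgn list \<Rightarrow> real set" where
  "gap_points t l = (\<lambda>(i, j). (t i + t (Suc i)) / 2) ` gaps l"

lemma finite_gap_points: "finite (gap_points t l)"
  by (simp add: gap_points_def finite_gaps)

lemma gap_point_bounds:
  fixes t :: "nat \<Rightarrow> real"
  assumes t: "strict_mono_on {..<length l} t" and "(i, j) \<in> gaps l"
  shows "t i < (t i + t (Suc i)) / 2" "(t i + t (Suc i)) / 2 < t (Suc i)" "Suc i < length l"
proof -
  show "Suc i < length l"
    using assms(2) by (auto simp: gaps_def consecutive_nonzero_def)
  then have "t i < t (Suc i)"
    using strict_mono_onD[OF t] by simp
  then show "t i < (t i + t (Suc i)) / 2" "(t i + t (Suc i)) / 2 < t (Suc i)"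
    by simp_all
qed

lemma image_notin_gap_points:
  fixes t :: "nat \<Rightarrow> real"
  assumes t: "strict_mono_on {..<length l} t" and "r < length l"
  shows "t r \<notin> gap_points t l"
proof
  assume "t r \<in> gap_points t l"
  then obtain i j where g: "(i, j) \<in> gaps l" and r: "t r = (t i + t (Suc i)) / 2"
    by (auto simp: gap_points_def)
  then have "t i < t r" "t r < t (Suc i)" "Suc i < length l"
    using gap_point_bounds[OF t g] by simp_all
  then show False
    using strict_mono_on_less[OF t] \<open>r < length l\<close> by simp
qed

lemma gap_points_between:
  fixes t :: "nat \<Rightarrow> real"
  assumes t: "strict_mono_on {..<length l} t" and ij: "consecutive_nonzero l i j"
  shows "gap_points t l \<inter> {t i<..<t j} = (if (i, j) \<in> gaps l then {(t i + t (Suc i)) / 2} else {})"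
proof -
  have bounds: "i < j" "j < length l"
    using ij by (auto simp: consecutive_nonzero_def)
  have t_less: "t a < t b \<longleftrightarrow> a < b" if "a < length l" "b < length l" for a b
    using strict_mono_on_less[OF t] that by simp
  define m where "m = (t i + t (Suc i)) / 2"
  have between_gap: "(i, j) \<in> gaps l \<and> x = m"
    if hx: "x \<in> gap_points t l" "t i < x" "x < t j" for x
  proof -
    obtain a b where g: "(a, b) \<in> gaps l" and x: "x = (t a + t (Suc a)) / 2"
      using hx(1) unfolding gap_points_def by (auto simp del: eq_divide_eq_numeral1)
    have a: "a < length l" "l ! a \<noteq> SZero" "Suc a < length l"
      using g gap_point_bounds[OF t g] by (auto simp: gaps_def consecutive_nonzero_def)
    have "t i < t (Suc a)" "t a < t j"
      using hx x gap_point_bounds[OF t g] by linarith+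
    then have "i \<le> a" "a < j"
      using t_less a bounds by simp_all
    then have "a = i"
      using ij a by (auto simp: consecutive_nonzero_def le_less)
    then show ?thesis
      using g x ij consecutive_nonzero_unique by (auto simp: gaps_def m_def)
  qed
  have gap_between: "m \<in> gap_points t l \<inter> {t i<..<t j}" if "(i, j) \<in> gaps l"
  proof -
    have "t (Suc i) \<le> t j"
      using strict_mono_on_leD[OF t] bounds by simp
    then show ?thesis
      using that gap_point_bounds[OF t that] by (force simp: gap_points_def m_def)
  qed
  show ?thesis
    unfolding m_def[symmetric] using between_gap gap_between by (auto split: if_split)
qed

lemma root_poly_gap_points_pair_pos_iff:
  fixes t :: "nat \<Rightarrow> real"
  assumes t: "strict_mono_on {..<length l} t" and ij: "consecutive_nonzero l i j"
  shows "0 < poly (root_poly (gap_points t l)) (t i) * poly (root_poly (gap_points t l)) (t j)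
    \<longleftrightarrow> (i, j) \<notin> gaps l"
proof -
  have bounds: "i < j" "j < length l"
    using ij by (auto simp: consecutive_nonzero_def)
  then have "t i \<notin> gap_points t l" "t j \<notin> gap_points t l" "t i < t j"
    using image_notin_gap_points[OF t] strict_mono_onD[OF t] by simp_all
  then show ?thesis
    using root_poly_pair_pos_iff[OF finite_gap_points] by (simp add: gap_points_between[OF t ij])
qed

lemma sign_pattern_realizable:
  fixes t :: "nat \<Rightarrow> real"
  assumes t: "strict_mono_on {..<length l} t"
  obtains p where "p \<noteq> 0" "degree p \<le> m_val l"
    "map (\<lambda>i. sign_of (poly p (t i))) [0..<length l] = l"
proof -
  define Z where "Z = root_poly (t ` zero_positions l)"
  define G where "G = root_poly (gap_points t l)"
  have finZ: "finite (t ` zero_positions l)"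
    by (simp add: zero_positions_def)
  have "degree (Z * G) = card (t ` zero_positions l) + card (gap_points t l)"
    unfolding Z_def G_def using finZ
    by (simp add: degree_mult_eq degree_root_poly root_poly_nonzero finite_gap_points)
  also have "\<dots> \<le> m_val l"
    unfolding m_val_eq gap_points_def by (intro add_mono card_image_le finite_gaps) (simp add: zero_positions_def)
  finally have deg: "degree (Z * G) \<le> m_val l" .
  have zeros: "poly (Z * G) (t i) = 0 \<longleftrightarrow> l ! i = SZero" if "i < length l" for i
    using that strict_mono_on_imp_inj_on[OF t] image_notin_gap_points[OF t that] finZ
    by (auto simp: Z_def G_def poly_root_poly_eq_0_iff finite_gap_points zero_positions_def inj_on_eq_iff)
  have changes: "0 < poly (Z * G) (t i) * poly (Z * G) (t j) \<longleftrightarrow> l ! i = l ! j"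
    if ij: "consecutive_nonzero l i j" for i j
  proof -
    have "poly (Z * G) (t i) * poly (Z * G) (t j) =
        (poly Z (t i) * poly Z (t j)) * (poly G (t i) * poly G (t j))"
      by (simp add: algebra_simps)
    moreover have "poly (Z * G) (t i) * poly (Z * G) (t j) \<noteq> 0"
      using zeros ij by (simp add: consecutive_nonzero_def)
    ultimately have "0 < poly (Z * G) (t i) * poly (Z * G) (t j) \<longleftrightarrow>
        (0 < poly Z (t i) * poly Z (t j) \<longleftrightarrow> 0 < poly G (t i) * poly G (t j))"
      by (metis mult_eq_0_iff zero_less_mult_iff_nonzero)
    then show ?thesis
      using root_poly_zero_positions_pair_pos_iff[OF t ij] root_poly_gap_points_pair_pos_iff[OF t ij] ij
      unfolding Z_def G_def by (auto simp: gaps_def)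
  qed
  obtain c where "c \<noteq> 0" and c: "\<And>i. i < length l \<Longrightarrow> sign_of (c * poly (Z * G) (t i)) = l ! i"
    using sign_pattern_up_to_scaling[of l "\<lambda>i. poly (Z * G) (t i)", OF zeros changes] by blast
  show thesis
  proof
    show "smult c (Z * G) \<noteq> 0"
      using \<open>c \<noteq> 0\<close> by (simp add: Z_def G_def root_poly_nonzero)
    show "degree (smult c (Z * G)) \<le> m_val l"
      using deg by simp
    show "map (\<lambda>i. sign_of (poly (smult c (Z * G)) (t i))) [0..<length l] = l"
      by (rule nth_equalityI) (simp_all add: c del: poly_mult)
  qed
qed

section \<open>Faces of zonotopes\<close>

definition zonotope :: "nat \<Rightarrow> (nat \<Rightarrow> 'a::euclidean_space) \<Rightarrow> 'a set" where
  "zonotope n v = {\<Sum>i<n. c i *\<^sub>R v i | c. \<forall>i<n. 0 \<le> c i \<and> c i \<le> 1}"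

definition zonotope_face :: "nat \<Rightarrow> (nat \<Rightarrow> 'a::euclidean_space) \<Rightarrow> sgn list \<Rightarrow> 'a set" where
  "zonotope_face n v l = {\<Sum>i<n. c i *\<^sub>R v i | c. \<forall>i<n. 0 \<le> c i \<and> c i \<le> 1 \<and>
      (l ! i = SPlus \<longrightarrow> c i = 1) \<and> (l ! i = SMinus \<longrightarrow> c i = 0)}"

definition sign_vector :: "nat \<Rightarrow> (nat \<Rightarrow> 'a::euclidean_space) \<Rightarrow> 'a \<Rightarrow> sgn list" where
  "sign_vector n v a = map (\<lambda>i. sign_of (a \<bullet> v i)) [0..<n]"

definition zonotope_support :: "nat \<Rightarrow> (nat \<Rightarrow> 'a::euclidean_space) \<Rightarrow> 'a \<Rightarrow> real" where
  "zonotope_support n v a = (\<Sum>i<n. max 0 (a \<bullet> v i))"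

lemma mult_le_max_0:
  fixes c w :: real
  assumes "0 \<le> c" "c \<le> 1"
  shows "c * w \<le> max 0 w"
  using assms by (cases "0 \<le> w") (auto simp: mult_left_le_one_le mult_nonneg_nonpos)

lemma max_0_eq_mult_iff:
  fixes c w :: real
  shows "max 0 w = c * w \<longleftrightarrow> (0 < w \<longrightarrow> c = 1) \<and> (w < 0 \<longrightarrow> c = 0)"
  by (cases w "0::real" rule: linorder_cases) auto

lemma inner_le_zonotope_support:
  assumes "x \<in> zonotope n v"
  shows "a \<bullet> x \<le> zonotope_support n v a"
proof -
  obtain c where x: "x = (\<Sum>i<n. c i *\<^sub>R v i)" and c: "\<forall>i<n. 0 \<le> c i \<and> c i \<le> 1"
    using assms unfolding zonotope_def by blast
  have "a \<bullet> x = (\<Sum>i<n. c i * (a \<bullet> v i))"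
    by (simp add: x inner_sum_right)
  also have "\<dots> \<le> zonotope_support n v a"
    unfolding zonotope_support_def using c by (intro sum_mono) (simp add: mult_le_max_0)
  finally show ?thesis .
qed

lemma inner_sum_eq_zonotope_support_iff:
  assumes c: "\<forall>i<n. 0 \<le> c i \<and> c i \<le> 1"
  shows "a \<bullet> (\<Sum>i<n. c i *\<^sub>R v i) = zonotope_support n v a \<longleftrightarrow>
         (\<forall>i<n. (0 < a \<bullet> v i \<longrightarrow> c i = 1) \<and> (a \<bullet> v i < 0 \<longrightarrow> c i = 0))"
proof -
  have "zonotope_support n v a - a \<bullet> (\<Sum>i<n. c i *\<^sub>R v i) =
      (\<Sum>i<n. max 0 (a \<bullet> v i) - c i * (a \<bullet> v i))"
    by (simp add: zonotope_support_def inner_sum_right sum_subtractf)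
  then have "a \<bullet> (\<Sum>i<n. c i *\<^sub>R v i) = zonotope_support n v a \<longleftrightarrow>
      (\<Sum>i<n. max 0 (a \<bullet> v i) - c i * (a \<bullet> v i)) = 0"
    by linarith
  also have "\<dots> \<longleftrightarrow> (\<forall>i\<in>{..<n}. max 0 (a \<bullet> v i) - c i * (a \<bullet> v i) = 0)"
    using c mult_le_max_0 by (intro sum_nonneg_eq_0_iff) auto
  also have "\<dots> \<longleftrightarrow> (\<forall>i<n. (0 < a \<bullet> v i \<longrightarrow> c i = 1) \<and> (a \<bullet> v i < 0 \<longrightarrow> c i = 0))"
    by (auto simp: max_0_eq_mult_iff)
  finally show ?thesis .
qed

lemma zonotope_face_sign_vector:
  "zonotope_face n v (sign_vector n v a) = zonotope n v \<inter> {x. a \<bullet> x = zonotope_support n v a}"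
  unfolding zonotope_face_def zonotope_def
  using inner_sum_eq_zonotope_support_iff[of n _ a v] by (auto simp: sign_vector_def)

lemma zonotope_face_mono:
  assumes "lam_le l m" "length l = n"
  shows "zonotope_face n v l \<subseteq> zonotope_face n v m"
proof
  fix x assume "x \<in> zonotope_face n v l"
  then obtain c where x: "x = (\<Sum>i<n. c i *\<^sub>R v i)" and c: "\<forall>i<n. 0 \<le> c i \<and> c i \<le> 1 \<and>
      (l ! i = SPlus \<longrightarrow> c i = 1) \<and> (l ! i = SMinus \<longrightarrow> c i = 0)"
    unfolding zonotope_face_def by blast
  have "m ! i = l ! i \<or> m ! i = SZero" if "i < n" for i
    using assms that by (auto simp: lam_le_def sgn_le_def)
  with c have "\<forall>i<n. 0 \<le> c i \<and> c i \<le> 1 \<and>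
      (m ! i = SPlus \<longrightarrow> c i = 1) \<and> (m ! i = SMinus \<longrightarrow> c i = 0)"
    by (metis sgn.distinct(1,3))
  then show "x \<in> zonotope_face n v m"
    unfolding zonotope_face_def x by blast
qed

lemma zonotope_face_subset_imp_lam_le:
  assumes len: "length l = n" and sub: "zonotope_face n v l \<subseteq> zonotope_face n v (sign_vector n v b)"
  shows "lam_le l (sign_vector n v b)"
proof -
  let ?m = "sign_vector n v b"
  have "sgn_le (l ! i) (?m ! i)" if i: "i < n" for i
  proof (rule ccontr)
    assume "\<not> sgn_le (l ! i) (?m ! i)"
    then have ne: "l ! i \<noteq> ?m ! i" "?m ! i \<noteq> SZero"
      by (auto simp: sgn_le_def)
    define c where "c j = (if j = i then (if ?m ! i = SPlus then 0 else 1)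
                           else (if l ! j = SPlus then 1 else 0 :: real))" for j
    have c: "\<forall>j<n. 0 \<le> c j \<and> c j \<le> 1 \<and> (l ! j = SPlus \<longrightarrow> c j = 1) \<and> (l ! j = SMinus \<longrightarrow> c j = 0)"
      using ne by (cases "l ! i"; cases "?m ! i") (auto simp: c_def)
    then have "(\<Sum>j<n. c j *\<^sub>R v j) \<in> zonotope_face n v ?m"
      using sub unfolding zonotope_face_def by blast
    then have "\<forall>j<n. (0 < b \<bullet> v j \<longrightarrow> c j = 1) \<and> (b \<bullet> v j < 0 \<longrightarrow> c j = 0)"
      using inner_sum_eq_zonotope_support_iff[of n c b v] c
      unfolding zonotope_face_sign_vector zonotope_def by auto
    then show False
      using i ne by (cases "?m ! i") (auto simp: sign_vector_def c_def)
  qed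
  then show ?thesis
    using len by (auto simp: lam_le_def sign_vector_def)
qed

lemma zonotope_face_subset_iff:
  "length l = n \<Longrightarrow>
    zonotope_face n v l \<subseteq> zonotope_face n v (sign_vector n v b) \<longleftrightarrow> lam_le l (sign_vector n v b)"
  using zonotope_face_mono zonotope_face_subset_imp_lam_le by blast

lemma zonotope_face_nonempty: "zonotope_face n v l \<noteq> {}"
proof -
  define c where "c j = (if l ! j = SPlus then 1 else 0 :: real)" for j
  have "(\<Sum>j<n. c j *\<^sub>R v j) \<in> zonotope_face n v l"
    unfolding zonotope_face_def c_def by force
  then show ?thesis by auto
qed

lemma zonotope_face_replicate_SZero: "zonotope_face n v (replicate n SZero) = zonotope n v"
  unfolding zonotope_face_def zonotope_def by auto

lemma zonotope_eq_sum_segments: "zonotope n v = (\<Sum>i<n. closed_segment 0 (v i))"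
proof -
  have segment: "closed_segment 0 w = {u *\<^sub>R w | u. 0 \<le> u \<and> u \<le> 1}" for w :: 'a
    by (auto simp: closed_segment_def)
  have "(\<Sum>i<n. closed_segment 0 (v i)) = {sum x {..<n} | x. \<forall>i\<in>{..<n}. x i \<in> closed_segment 0 (v i)}"
    by (rule set_sum_alt) simp
  also have "\<dots> = zonotope n v"
  proof (intro set_eqI iffI)
    fix y assume "y \<in> {sum x {..<n} | x. \<forall>i\<in>{..<n}. x i \<in> closed_segment 0 (v i)}"
    then obtain x where y: "y = sum x {..<n}"
      and x: "\<forall>i\<in>{..<n}. \<exists>u. x i = u *\<^sub>R v i \<and> 0 \<le> u \<and> u \<le> 1"
      unfolding segment by blast
    then obtain c where "\<forall>i\<in>{..<n}. x i = c i *\<^sub>R v i \<and> 0 \<le> c i \<and> c i \<le> 1"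
      by metis
    then show "y \<in> zonotope n v"
      unfolding zonotope_def y by (auto intro!: exI[of _ c] sum.cong)
  next
    fix y assume "y \<in> zonotope n v"
    then show "y \<in> {sum x {..<n} | x. \<forall>i\<in>{..<n}. x i \<in> closed_segment 0 (v i)}"
      unfolding zonotope_def segment by blast
  qed
  finally show ?thesis ..
qed

lemma polytope_zonotope: "polytope (zonotope n v)"
proof -
  have "zonotope n v = convex hull (\<Sum>i<n. {0, v i})"
    by (simp add: zonotope_eq_sum_segments segment_convex_hull convex_hull_set_sum)
  then show ?thesis
    unfolding polytope_def using finite_set_sum[of "{..<n}" "\<lambda>i. {0, v i}"] by auto
qed

lemma face_of_zonotope_sign_vector: "zonotope_face n v (sign_vector n v a) face_of zonotope n v"
  unfolding zonotope_face_sign_vector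
  by (rule face_of_Int_supporting_hyperplane_le[OF polytope_imp_convex[OF polytope_zonotope]])
     (rule inner_le_zonotope_support)

lemma face_of_zonotope_obtains_sign_vector:
  assumes "F face_of zonotope n v" "F \<noteq> {}"
  obtains a where "F = zonotope_face n v (sign_vector n v a)"
proof -
  have "F exposed_face_of zonotope n v"
    using assms(1) exposed_face_of_polyhedron[OF polytope_imp_polyhedron[OF polytope_zonotope]] by blast
  then obtain a b where below: "\<And>x. x \<in> zonotope n v \<Longrightarrow> a \<bullet> x \<le> b"
    and F: "F = zonotope n v \<inter> {x. a \<bullet> x = b}"
    unfolding exposed_face_of_def by blast
  obtain x where "x \<in> F"
    using assms(2) by blast
  then have "b \<le> zonotope_support n v a"
    using F inner_le_zonotope_support by fastforce
  moreover have "zonotope_support n v a \<le> b"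
  proof -
    define c where "c j = (if 0 < a \<bullet> v j then 1 else 0 :: real)" for j
    have c: "\<forall>j<n. 0 \<le> c j \<and> c j \<le> 1"
      by (simp add: c_def)
    then have "(\<Sum>j<n. c j *\<^sub>R v j) \<in> zonotope n v"
      unfolding zonotope_def by blast
    moreover have "a \<bullet> (\<Sum>j<n. c j *\<^sub>R v j) = zonotope_support n v a"
      using c by (subst inner_sum_eq_zonotope_support_iff) (auto simp: c_def)
    ultimately show ?thesis
      using below by fastforce
  qed
  ultimately show thesis
    using that[of a] F by (simp add: zonotope_face_sign_vector)
qed

theorem proper_faces_zonotope:
  "proper_faces (zonotope n v) = zonotope_face n v ` (range (sign_vector n v) - {replicate n SZero})"
proof -
  have whole: "zonotope_face n v (sign_vector n v a) = zonotope n v \<longleftrightarrow> sign_vector n v a = replicate n SZero" for a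
    using zonotope_face_subset_iff[of "replicate n SZero" n v a] zonotope_face_replicate_SZero[of n v]
      zonotope_face_mono[of "sign_vector n v a" "replicate n SZero" n v]
    by (auto simp: lam_le_replicate_SZero_iff sign_vector_def)
  show ?thesis
  proof (intro set_eqI iffI)
    fix F assume "F \<in> proper_faces (zonotope n v)"
    then have F: "F face_of zonotope n v" "F \<noteq> {}" "F \<noteq> zonotope n v"
      by (simp_all add: proper_faces_def)
    obtain a where "F = zonotope_face n v (sign_vector n v a)"
      using face_of_zonotope_obtains_sign_vector[OF F(1,2)] by blast
    with F(3) whole show "F \<in> zonotope_face n v ` (range (sign_vector n v) - {replicate n SZero})"
      by blast
  next
    fix F assume "F \<in> zonotope_face n v ` (range (sign_vector n v) - {replicate n SZero})"
    then obtain a where "F = zonotope_face n v (sign_vector n v a)" "sign_vector n v a \<noteq> replicate n SZero"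
      by blast
    then show "F \<in> proper_faces (zonotope n v)"
      using face_of_zonotope_sign_vector[of n v a] zonotope_face_nonempty[of n v] whole[of a]
      by (simp add: proper_faces_def)
  qed
qed

lemma subset_order_embedding_inv_into:
  fixes g :: "'a \<Rightarrow> 'b set"
  assumes "g ` A = B"
    and embedding: "\<And>x y. x \<in> A \<Longrightarrow> y \<in> A \<Longrightarrow> g x \<subseteq> g y \<longleftrightarrow> le x y"
    and antisym: "\<And>x y. x \<in> A \<Longrightarrow> y \<in> A \<Longrightarrow> le x y \<Longrightarrow> le y x \<Longrightarrow> x = y"
  shows "bij_betw (inv_into A g) B A \<and> (\<forall>F\<in>B. \<forall>G\<in>B. F \<subseteq> G \<longleftrightarrow> le (inv_into A g F) (inv_into A g G))"
proof -
  have "inj_on g A"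
  proof (rule inj_onI)
    fix x y assume "x \<in> A" "y \<in> A" "g x = g y"
    then show "x = y"
      using embedding[of x y] embedding[of y x] antisym[of x y] by simp
  qed
  with assms(1) have "bij_betw (inv_into A g) B A"
    by (intro bij_betw_inv_into) (simp add: bij_betw_def)
  moreover have "F \<subseteq> G \<longleftrightarrow> le (inv_into A g F) (inv_into A g G)" if "F \<in> B" "G \<in> B" for F G
  proof -
    have FG: "F \<in> g ` A" "G \<in> g ` A"
      using that assms(1) by simp_all
    then have "g (inv_into A g F) = F" "g (inv_into A g G) = G"
      by (simp_all add: f_inv_into_f)
    moreover have "inv_into A g F \<in> A" "inv_into A g G \<in> A"
      using FG by (simp_all add: inv_into_into)
    ultimately show ?thesis
      using embedding[of "inv_into A g F" "inv_into A g G"] by simp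
  qed
  ultimately show ?thesis
    by blast
qed

theorem zonotope_face_poset:
  "\<exists>f. bij_betw f (proper_faces (zonotope n v)) (range (sign_vector n v) - {replicate n SZero}) \<and>
     (\<forall>F\<in>proper_faces (zonotope n v). \<forall>G\<in>proper_faces (zonotope n v). F \<subseteq> G \<longleftrightarrow> lam_le (f F) (f G))"
proof -
  let ?C = "range (sign_vector n v) - {replicate n SZero}"
  have "zonotope_face n v ` ?C = proper_faces (zonotope n v)"
    by (rule proper_faces_zonotope[symmetric])
  moreover have "zonotope_face n v l \<subseteq> zonotope_face n v m \<longleftrightarrow> lam_le l m"
    if l: "l \<in> ?C" and m: "m \<in> ?C" for l m
  proof -
    obtain b where "m = sign_vector n v b"
      using m by blast
    moreover have "length l = n"
      using l by (auto simp: sign_vector_def)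
    ultimately show ?thesis
      by (simp add: zonotope_face_subset_iff)
  qed
  ultimately have "bij_betw (inv_into ?C (zonotope_face n v)) (proper_faces (zonotope n v)) ?C \<and>
      (\<forall>F\<in>proper_faces (zonotope n v). \<forall>G\<in>proper_faces (zonotope n v).
        F \<subseteq> G \<longleftrightarrow> lam_le (inv_into ?C (zonotope_face n v) F) (inv_into ?C (zonotope_face n v) G))"
    by (rule subset_order_embedding_inv_into) (auto intro: lam_le_antisym)
  then show ?thesis
    by blast
qed

section \<open>The cyclic zonotope\<close>

definition moment_exponent :: "'d::{finite,linorder} \<Rightarrow> nat" where
  "moment_exponent k = card {j. j < k}"

lemma moment_vec_nth: "moment_vec x $ k = x ^ moment_exponent k"
  by (simp add: moment_vec_def moment_exponent_def)

lemma moment_exponent_less: "moment_exponent (k :: 'd::{finite,linorder}) < CARD('d)"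
  unfolding moment_exponent_def by (rule psubset_card_mono) auto

lemma strict_mono_moment_exponent: "strict_mono (moment_exponent :: 'd::{finite,linorder} \<Rightarrow> nat)"
  unfolding moment_exponent_def by (intro strict_monoI psubset_card_mono) auto

lemma bij_betw_moment_exponent:
  "bij_betw (moment_exponent :: 'd::{finite,linorder} \<Rightarrow> nat) UNIV {..<CARD('d)}"
proof -
  have inj: "inj (moment_exponent :: 'd \<Rightarrow> nat)"
    using strict_mono_moment_exponent by (rule strict_mono_imp_inj_on)
  have "moment_exponent ` (UNIV :: 'd set) \<subseteq> {..<CARD('d)}"
    using moment_exponent_less by auto
  moreover have "card (moment_exponent ` (UNIV :: 'd set)) = card {..<CARD('d)}"
    using card_image[OF inj] by simp
  ultimately have "moment_exponent ` (UNIV :: 'd set) = {..<CARD('d)}"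
    by (intro card_subset_eq) auto
  with inj show ?thesis
    by (simp add: bij_betw_def)
qed

definition moment_poly :: "real ^ 'd::{finite,linorder} \<Rightarrow> real poly" where
  "moment_poly a = (\<Sum>k\<in>UNIV. monom (a $ k) (moment_exponent k))"

lemma poly_moment_poly: "poly (moment_poly a) x = a \<bullet> moment_vec x"
  by (simp add: moment_poly_def poly_sum poly_monom inner_vec_def moment_vec_nth)

lemma degree_moment_poly: "degree (moment_poly (a :: real ^ 'd::{finite,linorder})) < CARD('d)"
  unfolding moment_poly_def
  by (intro degree_sum_less le_less_trans[OF degree_monom_le moment_exponent_less]) simp

definition coeff_vec :: "real poly \<Rightarrow> real ^ 'd::{finite,linorder}" where
  "coeff_vec p = (\<chi> k. coeff p (moment_exponent k))"

lemma inner_coeff_vec_moment_vec: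
  assumes "degree p < CARD('d)"
  shows "(coeff_vec p :: real ^ 'd::{finite,linorder}) \<bullet> moment_vec x = poly p x"
proof -
  have "(coeff_vec p :: real ^ 'd::{finite,linorder}) \<bullet> moment_vec x =
      (\<Sum>k\<in>(UNIV :: 'd set). coeff p (moment_exponent k) * x ^ moment_exponent k)"
    by (simp add: coeff_vec_def inner_vec_def moment_vec_nth)
  also have "\<dots> = (\<Sum>e<CARD('d). coeff p e * x ^ e)"
    using sum.reindex_bij_betw[OF bij_betw_moment_exponent, of "\<lambda>e. coeff p e * x ^ e"] by simp
  also have "\<dots> = (\<Sum>e\<le>degree p. coeff p e * x ^ e)"
    using assms by (intro sum.mono_neutral_right) (auto simp: coeff_eq_0)
  also have "\<dots> = poly p x"
    by (simp add: poly_altdef)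
  finally show ?thesis .
qed

lemma range_sign_vector_moment_curve:
  fixes t :: "nat \<Rightarrow> real"
  assumes t: "strict_mono_on {..<n} t"
  shows "range (sign_vector n (\<lambda>i. moment_vec (t i) :: real ^ 'd::{finite,linorder})) =
    {l \<in> Lambda n. m_val l \<le> CARD('d) - 1} \<union> {replicate n SZero}"
    (is "range ?sv = ?L \<union> _")
proof (intro set_eqI iffI)
  fix l assume "l \<in> range ?sv"
  then obtain a where "l = ?sv a"
    by blast
  then have l: "l = map (\<lambda>i. sign_of (poly (moment_poly a) (t i))) [0..<n]"
    by (simp add: sign_vector_def poly_moment_poly)
  show "l \<in> ?L \<union> {replicate n SZero}"
  proof (cases "moment_poly a = 0")
    case True
    then show ?thesis
      by (simp add: l map_replicate_const)
  next
    case False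
    then have "m_val l \<le> degree (moment_poly a)"
      unfolding l using t by (rule m_val_sign_pattern_le_degree[rotated])
    then have "m_val l \<le> CARD('d) - 1"
      using degree_moment_poly[of a] by linarith
    then show ?thesis
      by (simp add: l Lambda_def)
  qed
next
  fix l assume "l \<in> ?L \<union> {replicate n SZero}"
  then consider "l = replicate n SZero" | "l \<in> ?L"
    by blast
  then show "l \<in> range ?sv"
  proof cases
    case 1
    then have "l = ?sv 0"
      by (simp add: sign_vector_def map_replicate_const sign_of_def)
    then show ?thesis by blast
  next
    case 2
    then have len: "length l = n" and "m_val l \<le> CARD('d) - 1"
      by (simp_all add: Lambda_def)
    moreover have "0 < CARD('d)"
      by (rule zero_less_card_finite)
    ultimately have "m_val l < CARD('d)"
      by linarith
    obtain p where "degree p \<le> m_val l" and p: "map (\<lambda>i. sign_of (poly p (t i))) [0..<length l] = l"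
      using sign_pattern_realizable[of l t] t len by blast
    then have "degree p < CARD('d)"
      using \<open>m_val l < CARD('d)\<close> by simp
    then have "?sv (coeff_vec p) = l"
      using p len by (simp add: sign_vector_def inner_coeff_vec_moment_vec)
    then show ?thesis by (metis rangeI)
  qed
qed

corollary proper_sign_vectors_moment_curve:
  fixes t :: "nat \<Rightarrow> real"
  assumes "strict_mono_on {..<n} t" and "CARD('d) \<le> n"
  shows "range (sign_vector n (\<lambda>i. moment_vec (t i) :: real ^ 'd::{finite,linorder})) - {replicate n SZero} =
    {l \<in> Lambda n. m_val l \<le> CARD('d) - 1}"
proof -
  have "0 < CARD('d)"
    by (rule zero_less_card_finite)
  then have "\<not> n \<le> CARD('d) - 1"
    using assms(2) by linarith
  then have "replicate n SZero \<notin> {l \<in> Lambda n. m_val l \<le> CARD('d) - 1}"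
    by (simp add: m_val_replicate_SZero)
  then show ?thesis
    using range_sign_vector_moment_curve[OF assms(1), where 'd='d] by blast
qed

lemma cyclic_zonotope_eq_zonotope:
  "cyclic_zonotope n s = zonotope n (\<lambda>i. moment_vec (s (Suc i)))"
proof -
  have shift: "(\<Sum>i=1..n. c i *\<^sub>R moment_vec (s i)) = (\<Sum>i<n. c (Suc i) *\<^sub>R moment_vec (s (Suc i)))"
    for c :: "nat \<Rightarrow> real"
    by (rule sum_bounds_lt_plus1[symmetric])
  show ?thesis
    unfolding cyclic_zonotope_def zonotope_def shift
  proof (intro set_eqI iffI)
    fix x
    assume "x \<in> {x. \<exists>c. (\<forall>i\<in>{1..n}. 0 \<le> c i \<and> c i \<le> 1) \<and> x = (\<Sum>i<n. c (Suc i) *\<^sub>R moment_vec (s (Suc i)))}"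
    then show "x \<in> {\<Sum>i<n. c i *\<^sub>R moment_vec (s (Suc i)) |c. \<forall>i<n. 0 \<le> c i \<and> c i \<le> 1}"
      by force
  next
    fix x
    assume "x \<in> {\<Sum>i<n. c i *\<^sub>R moment_vec (s (Suc i)) |c. \<forall>i<n. 0 \<le> c i \<and> c i \<le> 1}"
    then obtain c where "x = (\<Sum>i<n. c i *\<^sub>R moment_vec (s (Suc i)))" "\<forall>i<n. 0 \<le> c i \<and> c i \<le> 1"
      by blast
    then show "x \<in> {x. \<exists>c. (\<forall>i\<in>{1..n}. 0 \<le> c i \<and> c i \<le> 1) \<and> x = (\<Sum>i<n. c (Suc i) *\<^sub>R moment_vec (s (Suc i)))}"
      by (intro CollectI exI[of _ "\<lambda>i. c (i - 1)"]) auto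
  qed
qed

theorem proposition3p2:
  fixes n :: nat and s :: "nat \<Rightarrow> real"
  assumes "\<And>i j. 1 \<le> i \<Longrightarrow> i < j \<Longrightarrow> j \<le> n \<Longrightarrow> s i < s j"
    and "CARD('d) \<le> n"
  shows "\<exists>f. bij_betw f (proper_faces (cyclic_zonotope n s :: (real ^ ('d::{finite,linorder})) set))
                {l \<in> Lambda n. m_val l \<le> CARD('d) - 1} \<and>
             (\<forall>F\<in>proper_faces (cyclic_zonotope n s :: (real ^ ('d::{finite,linorder})) set).
                \<forall>G\<in>proper_faces (cyclic_zonotope n s :: (real ^ ('d::{finite,linorder})) set).
                  F \<subseteq> G \<longleftrightarrow> lam_le (f F) (f G))"
proof -
  have "strict_mono_on {..<n} (\<lambda>i. s (Suc i))"
    by (intro strict_mono_onI assms(1)) auto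
  then have "range (sign_vector n (\<lambda>i. moment_vec (s (Suc i)) :: real ^ 'd::{finite,linorder})) - {replicate n SZero} =
      {l \<in> Lambda n. m_val l \<le> CARD('d) - 1}"
    using assms(2) by (rule proper_sign_vectors_moment_curve)
  then show ?thesis
    using zonotope_face_poset[of n "\<lambda>i. moment_vec (s (Suc i)) :: real ^ 'd::{finite,linorder}"]
    by (simp add: cyclic_zonotope_eq_zonotope)
qed

end
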